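(* Let $b_{10}>0$, $b_{11}\ge0$, $c_{01}\ge0$, $c_{11}\ge0$, and define $\gamma'=\frac{c_{01}}{b_{10}}$, $\delta'=\frac{b_{10}-b_{11}+c_{11}-c_{01}}{b_{10}}$. Let $\mathcal{F}=\{(P_{11},t): P_{11}\in[0,1],\ P_{11}-1\le t\le P_{11}\}$ and $\mathcal{P}=\{(P_{11},t)\in\mathcal{F}: t>\gamma'+\delta'P_{11}\}$. Then $\mathcal{P}\neq\emptyset$ if and only if $c_{11}<b_{11}$.
   Context: Double binary causal classification: $P_{11}$ is the probability of the positive outcome under the positive treatment, $t=P_{11}-P_{10}$ the estimated individual treatment effect, $b_{ij}$ the benefit of outcome $i$ under treatment $j$ and $c_{ij}$ the cost of outcome $i$ under treatment $j$, normalized so that $c_{00}=c_{10}=0$, $b_{00}=b_{01}=0$. The cost-sensitive causal decision boundary (equality of expected profits of the two treatments) is then $t=\gamma'+\delta'P_{11}$, and $\mathcal{P}$ is the positive treatment set. *)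

theory Defs
  imports Complex_Main
begin

definition gamma' :: "real \<Rightarrow> real \<Rightarrow> real" where
  "gamma' b10 c01 = c01 / b10"

definition delta' :: "real \<Rightarrow> real \<Rightarrow> real \<Rightarrow> real \<Rightarrow> real" where
  "delta' b10 b11 c01 c11 = (b10 - b11 + c11 - c01) / b10"

definition feasible_region :: "(real \<times> real) set" where
  "feasible_region = {(p, t). 0 \<le> p \<and> p \<le> 1 \<and> p - 1 \<le> t \<and> t \<le> p}"

definition pos_treatment_set :: "real \<Rightarrow> real \<Rightarrow> real \<Rightarrow> real \<Rightarrow> (real \<times> real) set" where
  "pos_treatment_set b10 b11 c01 c11 =
     {(p, t) \<in> feasible_region. t > gamma' b10 c01 + delta' b10 b11 c01 c11 * p}"

end

theory Submission
  imports Defs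
begin

(* Multiplying the boundary by b10 > 0, the gap between the boundary and the upper edge t = P11
   of the feasible region is c01 (1 - P11) + (c11 - b11) P11. The first summand is nonnegative,
   so a point above the boundary forces c11 < b11; conversely, at the corner (1, 1) the gap is
   exactly c11 - b11. *)

lemma mem_pos_treatment_set_iff:
  assumes "b10 > 0"
  shows "(p, t) \<in> pos_treatment_set b10 b11 c01 c11 \<longleftrightarrow>
    (p, t) \<in> feasible_region \<and> c01 + (b10 - b11 + c11 - c01) * p < b10 * t"
  using assms
  by (simp add: pos_treatment_set_def gamma'_def delta'_def field_simps)

lemma pos_treatment_set_gap_negative:
  assumes "b10 > 0" and "c01 \<ge> 0"
    and "(p, t) \<in> pos_treatment_set b10 b11 c01 c11"
  shows "(c11 - b11) * p < 0"
proof -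
  have p_le_1: "p \<le> 1" and t_le_p: "t \<le> p"
    and above: "c01 + (b10 - b11 + c11 - c01) * p < b10 * t"
    using assms by (auto simp: mem_pos_treatment_set_iff feasible_region_def)
  have "b10 * t \<le> b10 * p" using t_le_p \<open>b10 > 0\<close> by simp
  moreover have "c01 * (1 - p) \<ge> 0" using \<open>c01 \<ge> 0\<close> p_le_1 by simp
  ultimately show ?thesis using above by (simp add: algebra_simps)
qed

lemma corner_mem_pos_treatment_set:
  assumes "b10 > 0" and "c11 < b11"
  shows "(1, 1) \<in> pos_treatment_set b10 b11 c01 c11"
  using assms by (simp add: mem_pos_treatment_set_iff feasible_region_def)

theorem theorem2:
  fixes b10 b11 c01 c11 :: real
  assumes "b10 > 0" and "b11 \<ge> 0" and "c01 \<ge> 0" and "c11 \<ge> 0"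
  shows "pos_treatment_set b10 b11 c01 c11 \<noteq> {} \<longleftrightarrow> c11 < b11"
proof
  assume "pos_treatment_set b10 b11 c01 c11 \<noteq> {}"
  then obtain p t where pt: "(p, t) \<in> pos_treatment_set b10 b11 c01 c11" by auto
  then have "(c11 - b11) * p < 0"
    using pos_treatment_set_gap_negative assms(1,3) by blast
  moreover have "p \<ge> 0"
    using pt by (simp add: pos_treatment_set_def feasible_region_def)
  ultimately show "c11 < b11" by (smt (verit) mult_nonneg_nonneg)
next
  assume "c11 < b11"
  then show "pos_treatment_set b10 b11 c01 c11 \<noteq> {}"
    using corner_mem_pos_treatment_set assms(1) by blast
qed

end
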